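(* In the setting below, if $$\sum_{t\in\mathcal K}\hat d_t^\top Z^\top f(x_t)< \sum_{t\in\mathcal K^c}\|Z^\top f(x_t)\|_2\quad\text{for all nonzero } Z\in\mathbb{R}^{m\times n},$$ then $\bar A$ is the unique global minimizer of $\min_{A\in\mathbb{R}^{n\times m}}\sum_{t=0}^{T-1}\|(\bar A-A)f(x_t)+\bar d_t\|_2$.
   Context: $f:\mathbb{R}^n\to\mathbb{R}^m$ is given, $\bar A\in\mathbb{R}^{n\times m}$, $\bar d_0,\dots,\bar d_{T-1}\in\mathbb{R}^n$, and $x_0=0_n$, $x_{t+1}=\bar A f(x_t)+\bar d_t$ for $t=0,\dots,T-1$. $\mathcal K:=\{t\in\{0,\dots,T-1\}:\bar d_t\ne 0\}$, $\mathcal K^c:=\{0,\dots,T-1\}\setminus\mathcal K$, $\hat d_t:=\bar d_t/\|\bar d_t\|_2$ for $t\in\mathcal K$. *)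

theory Defs
  imports "HOL-Analysis.Analysis"
begin

fun traj :: "(real^'n \<Rightarrow> real^'m) \<Rightarrow> real^'m^'n \<Rightarrow> (nat \<Rightarrow> real^'n) \<Rightarrow> nat \<Rightarrow> real^'n" where
  "traj f Abar d 0 = 0"
| "traj f Abar d (Suc t) = Abar *v f (traj f Abar d t) + d t"

end

theory Submission
  imports Defs
begin

text \<open>
  For \<open>A \<noteq> Abar\<close> put \<open>w\<^sub>t = (Abar - A) f(x\<^sub>t)\<close>. On \<open>K\<close> the unit vector \<open>sgn d\<^sub>t\<close> gives, by
  Cauchy--Schwarz, \<open>\<parallel>w\<^sub>t + d\<^sub>t\<parallel> \<ge> \<parallel>d\<^sub>t\<parallel> + sgn d\<^sub>t \<bullet> w\<^sub>t\<close>, and on \<open>K\<^sup>c\<close> simply \<open>\<parallel>w\<^sub>t + d\<^sub>t\<parallel> = \<parallel>w\<^sub>t\<parallel>\<close>.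
  Summing, the loss at \<open>A\<close> exceeds the loss \<open>\<Sum> \<parallel>d\<^sub>t\<parallel>\<close> at \<open>Abar\<close> by at least
  \<open>\<Sum>\<^sub>K sgn d\<^sub>t \<bullet> w\<^sub>t + \<Sum>\<^sub>K\<^sub>c \<parallel>w\<^sub>t\<parallel>\<close>, which is positive by the hypothesis applied to
  \<open>Z = (A - Abar)\<^sup>T\<close>.
\<close>

lemma norm_add_ge_norm_plus_inner_sgn:
  fixes d w :: "'a::real_inner"
  shows "norm d + sgn d \<bullet> w \<le> norm (w + d)"
proof -
  have "sgn d \<bullet> (w + d) \<le> norm (sgn d) * norm (w + d)"
    by (rule norm_cauchy_schwarz)
  also have "\<dots> \<le> norm (w + d)"
    by (simp add: norm_sgn)
  moreover have "sgn d \<bullet> d = norm d"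
    by (cases "d = 0") (simp_all add: sgn_div_norm dot_square_norm power2_eq_square)
  ultimately show ?thesis
    by (simp add: inner_add_right)
qed

lemma sum_norm_lt_sum_norm_add:
  fixes d w :: "'i \<Rightarrow> 'a::real_inner"
  assumes "finite I"
    and pos: "0 < (\<Sum>t\<in>{t\<in>I. d t \<noteq> 0}. sgn (d t) \<bullet> w t) + (\<Sum>t\<in>{t\<in>I. d t = 0}. norm (w t))"
  shows "(\<Sum>t\<in>I. norm (d t)) < (\<Sum>t\<in>I. norm (w t + d t))"
proof -
  let ?K = "{t\<in>I. d t \<noteq> 0}" and ?Kc = "{t\<in>I. d t = 0}"
  have split: "(\<Sum>t\<in>I. g t) = (\<Sum>t\<in>?K. g t) + (\<Sum>t\<in>?Kc. g t)" for g :: "'i \<Rightarrow> real"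
    using \<open>finite I\<close> by (subst sum.union_disjoint[symmetric]) (auto intro: sum.cong)
  have "(\<Sum>t\<in>I. norm (d t)) = (\<Sum>t\<in>?K. norm (d t))"
    using split[of "\<lambda>t. norm (d t)"] by simp
  also have "\<dots> < (\<Sum>t\<in>?K. norm (d t) + sgn (d t) \<bullet> w t) + (\<Sum>t\<in>?Kc. norm (w t))"
    using pos by (simp add: sum.distrib)
  also have "\<dots> \<le> (\<Sum>t\<in>?K. norm (w t + d t)) + (\<Sum>t\<in>?Kc. norm (w t + d t))"
    by (auto intro: add_mono sum_mono norm_add_ge_norm_plus_inner_sgn)
  also have "\<dots> = (\<Sum>t\<in>I. norm (w t + d t))"
    by (rule split[symmetric])
  finally show ?thesis .
qed

lemma transpose_eq_0_iff [simp]: "transpose A = 0 \<longleftrightarrow> A = 0"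
  by (auto simp: vec_eq_iff transpose_def)

theorem corollary3:
  fixes f :: "real^'n \<Rightarrow> real^'m"
    and Abar :: "real^'m^'n"
    and d :: "nat \<Rightarrow> real^'n"
    and T :: nat
  defines "x \<equiv> traj f Abar d"
    and "K \<equiv> {t. t < T \<and> d t \<noteq> 0}"
    and "Kc \<equiv> {t. t < T} - {t. t < T \<and> d t \<noteq> 0}"
  assumes cond: "\<And>Z :: real^'n^'m. Z \<noteq> 0 \<Longrightarrow>
      (\<Sum>t\<in>K. (d t /\<^sub>R norm (d t)) \<bullet> (transpose Z *v f (x t)))
        < (\<Sum>t\<in>Kc. norm (transpose Z *v f (x t)))"
  shows "\<forall>A :: real^'m^'n.
      (\<Sum>t<T. norm ((Abar - Abar) *v f (x t) + d t)) \<le> (\<Sum>t<T. norm ((Abar - A) *v f (x t) + d t))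
    \<and> ((\<Sum>t<T. norm ((Abar - A) *v f (x t) + d t)) = (\<Sum>t<T. norm ((Abar - Abar) *v f (x t) + d t)) \<longrightarrow> A = Abar)"
proof (intro allI)
  fix A :: "real^'m^'n"
  let ?w = "\<lambda>t. (Abar - A) *v f (x t)"
  have "(\<Sum>t<T. norm (d t)) < (\<Sum>t<T. norm (?w t + d t))" if "A \<noteq> Abar"
  proof (rule sum_norm_lt_sum_norm_add)
    have "Kc = {t. t < T \<and> d t = 0}"
      by (auto simp: Kc_def)
    moreover have "transpose (transpose (A - Abar)) *v v = - ((Abar - A) *v v)" for v
      by (simp add: matrix_vector_mult_diff_rdistrib)
    ultimately show "0 < (\<Sum>t\<in>{t\<in>{..<T}. d t \<noteq> 0}. sgn (d t) \<bullet> ?w t) + (\<Sum>t\<in>{t\<in>{..<T}. d t = 0}. norm (?w t))"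
      using cond[of "transpose (A - Abar)"] that
      by (simp add: K_def sgn_div_norm sum_negf)
  qed simp
  then show "(\<Sum>t<T. norm ((Abar - Abar) *v f (x t) + d t)) \<le> (\<Sum>t<T. norm (?w t + d t))
    \<and> ((\<Sum>t<T. norm (?w t + d t)) = (\<Sum>t<T. norm ((Abar - Abar) *v f (x t) + d t)) \<longrightarrow> A = Abar)"
    by (cases "A = Abar") auto
qed

end
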